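(* Let $X$ be a metric space of bounded geometry, $1\le p<\infty$, and let $\mathfrak U$ be a cover of $X$ with finite multiplicity $m(\mathfrak U)$, finite mesh $S(\mathfrak U)$, positive Lebesgue number $L(\mathfrak U)$, and such that no member of $\mathfrak U$ equals $X$. Then there exists a map $\xi\colon X\to\ell^p_1(X)$ with $S(\xi)=S(\mathfrak U)$ which is $\dfrac{2\,(2m(\mathfrak U)^2)^{1/p}}{L(\mathfrak U)}$-Lipschitz.
   Context: A metric space has bounded geometry if for every $R\ge0$ there is $C<\infty$ such that every ball of radius $R$ contains at most $C$ points. For a cover $\mathfrak U$ of $X$: $L(\mathfrak U,x)=\sup_{U\in\mathfrak U}\sup\{r: B_r(x)\subset U\}$, $L(\mathfrak U)=\inf_x L(\mathfrak U,x)$, $m(\mathfrak U)=\max_x\#\{U\in\mathfrak U:x\in U\}$, $S(\mathfrak U)=\sup_{U\in\mathfrak U}\operatorname{diam}U$. $\ell^p(X)$ is the space of $p$-summable real functions on $X$, $\ell^p_1(X)$ its unit sphere; for $\xi\colon X\to\ell^p(X)$, $x\mapsto\xi_x$, $S(\xi)=\sup\{d(x,y):\xi_x(y)\ne0\}$. *)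

theory Defs
  imports "HOL-Analysis.Analysis"
begin

text \<open>The metric space X is the whole type 'a :: metric_space.\<close>

definition bounded_geometry :: "'a::metric_space itself \<Rightarrow> bool" where
  "bounded_geometry _ \<longleftrightarrow>
     (\<forall>R::real. R \<ge> 0 \<longrightarrow> (\<exists>C::nat. \<forall>x::'a. finite (cball x R) \<and> card (cball x R) \<le> C))"

definition ediam :: "'a::metric_space set \<Rightarrow> ereal" where
  "ediam U = (SUP xy\<in>U \<times> U. ereal (dist (fst xy) (snd xy)))"

definition mesh :: "'a::metric_space set set \<Rightarrow> ereal" where
  "mesh \<U> = (SUP U\<in>\<U>. ediam U)"

definition leb_at :: "'a::metric_space set set \<Rightarrow> 'a \<Rightarrow> ereal" where
  "leb_at \<U> x = (SUP U\<in>\<U>. Sup {ereal r | r. ball x r \<subseteq> U})"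

definition leb :: "'a::metric_space set set \<Rightarrow> ereal" where
  "leb \<U> = (INF x. leb_at \<U> x)"

definition finite_mult :: "'a set set \<Rightarrow> bool" where
  "finite_mult \<U> \<longleftrightarrow> (\<exists>M::nat. \<forall>x. finite {U\<in>\<U>. x \<in> U} \<and> card {U\<in>\<U>. x \<in> U} \<le> M)"

definition mult :: "'a set set \<Rightarrow> nat" where
  "mult \<U> = (SUP x. card {U\<in>\<U>. x \<in> U})"

definition in_lp :: "real \<Rightarrow> ('a \<Rightarrow> real) \<Rightarrow> bool" where
  "in_lp p f \<longleftrightarrow> (\<lambda>z. \<bar>f z\<bar> powr p) summable_on UNIV"

definition lp_norm :: "real \<Rightarrow> ('a \<Rightarrow> real) \<Rightarrow> real" where
  "lp_norm p f = (\<Sum>\<^sub>\<infinity>z. \<bar>f z\<bar> powr p) powr (1 / p)"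

definition lp_sphere :: "real \<Rightarrow> ('a \<Rightarrow> real) set" where
  "lp_sphere p = {f. in_lp p f \<and> lp_norm p f = 1}"

definition prop_xi :: "('a::metric_space \<Rightarrow> 'a \<Rightarrow> real) \<Rightarrow> ereal" where
  "prop_xi \<xi> = Sup {ereal (dist x y) | x y. \<xi> x y \<noteq> 0}"

end

theory Submission
  imports Defs
begin

text \<open>With \<open>\<phi>\<^sub>U(x) = d(x, X - U)\<close>, the vector \<open>(\<phi>\<^sub>U(x))\<^sub>U\<close> over the members containing \<open>x\<close>
  has \<open>\<ell>\<^sup>p\<close>-norm \<open>A(x) \<ge> L(\<U>)\<close>, each \<open>\<phi>\<^sub>U\<close> is 1-Lipschitz and at most \<open>2 m(\<U>)\<close> of them are
  nonzero at \<open>x\<close> or \<open>y\<close>; so \<open>x \<mapsto> \<phi>(x) / A(x)\<close> maps into the unit sphere of \<open>\<ell>\<^sup>p(\<U>)\<close> with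
  Lipschitz constant \<open>2 (2 m(\<U>))\<^bsup>1/p\<^esup> / L(\<U>)\<close>, by Minkowski's inequality.  It is moved to
  \<open>\<ell>\<^sup>p(X)\<close> by spreading the \<open>p\<close>-th power of each coordinate uniformly over \<open>U\<close>, which preserves
  norms and does not increase distances.  Bounded geometry makes \<open>X\<close> discrete and the members
  finite, so \<open>\<xi>\<^sub>x(z) \<noteq> 0\<close> exactly when \<open>x\<close> and \<open>z\<close> share a member, whence \<open>S(\<xi>) = S(\<U>)\<close>.\<close>

definition lpnorm_on :: "real \<Rightarrow> 'i set \<Rightarrow> ('i \<Rightarrow> real) \<Rightarrow> real" where
  "lpnorm_on p I f = (\<Sum>i\<in>I. \<bar>f i\<bar> powr p) powr (1 / p)"

lemma lpnorm_on_nonneg: "0 \<le> lpnorm_on p I f"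
  by (simp add: lpnorm_on_def)

lemma lpnorm_on_powr:
  assumes "p > 0"
  shows "lpnorm_on p I f powr p = (\<Sum>i\<in>I. \<bar>f i\<bar> powr p)"
  using assms by (simp add: lpnorm_on_def powr_powr sum_nonneg)

lemma lpnorm_on_le:
  assumes "p > 0" "0 \<le> c" "(\<Sum>i\<in>I. \<bar>f i\<bar> powr p) \<le> c powr p"
  shows "lpnorm_on p I f \<le> c"
proof -
  have "lpnorm_on p I f \<le> (c powr p) powr (1 / p)"
    unfolding lpnorm_on_def using assms by (intro powr_mono2) (auto intro: sum_nonneg)
  with assms show ?thesis
    by (simp add: powr_powr)
qed

lemma lpnorm_on_eq:
  assumes "p > 0" "0 \<le> c" "(\<Sum>i\<in>I. \<bar>f i\<bar> powr p) = c powr p"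
  shows "lpnorm_on p I f = c"
  using assms by (simp add: lpnorm_on_def powr_powr)

lemma abs_le_lpnorm_on:
  assumes "p > 0" "finite I" "i \<in> I"
  shows "\<bar>f i\<bar> \<le> lpnorm_on p I f"
proof -
  have "(\<bar>f i\<bar> powr p) powr (1 / p) \<le> lpnorm_on p I f"
    unfolding lpnorm_on_def using assms by (intro powr_mono2 member_le_sum) auto
  with assms show ?thesis
    by (simp add: powr_powr)
qed

lemma lpnorm_on_cmult:
  assumes "p > 0"
  shows "lpnorm_on p I (\<lambda>i. c * f i) = \<bar>c\<bar> * lpnorm_on p I f"
  using assms
  by (intro lpnorm_on_eq)
     (auto simp: abs_mult powr_mult sum_distrib_left lpnorm_on_powr lpnorm_on_nonneg)

lemma lpnorm_on_minus_commute:
  "lpnorm_on p I (\<lambda>i. f i - g i) = lpnorm_on p I (\<lambda>i. g i - f i)"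
  by (simp add: lpnorm_on_def abs_minus_commute)

lemma lpnorm_on_mono_neutral:
  assumes "finite J" "I \<subseteq> J" "\<And>i. i \<in> J - I \<Longrightarrow> f i = 0"
  shows "lpnorm_on p J f = lpnorm_on p I f"
  unfolding lpnorm_on_def using assms by (subst sum.mono_neutral_left[of J I]) auto

lemma lpnorm_on_le_card:
  assumes "p > 0" "\<And>i. i \<in> I \<Longrightarrow> \<bar>f i\<bar> \<le> c"
  shows "lpnorm_on p I f \<le> real (card I) powr (1 / p) * c"
proof (cases "finite I \<and> I \<noteq> {}")
  case True
  then have "0 \<le> c"
    using assms(2) by force
  have "(\<Sum>i\<in>I. \<bar>f i\<bar> powr p) \<le> real (card I) * c powr p"
    using assms by (intro sum_bounded_above powr_mono2) auto
  also have "\<dots> = (real (card I) powr (1 / p) * c) powr p"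
    using assms \<open>0 \<le> c\<close> by (simp add: powr_mult powr_powr)
  finally show ?thesis
    using assms \<open>0 \<le> c\<close> by (intro lpnorm_on_le) auto
qed (auto simp: lpnorm_on_def)

lemma convex_on_powr_nonneg:
  assumes "p \<ge> 1"
  shows "convex_on {0..} (\<lambda>x::real. x powr p)"
proof (rule convex_on_linorderI)
  fix t x y :: real
  assume t: "0 < t" "t < 1" and xy: "x \<in> {0..}" "y \<in> {0..}" "x < y"
  show "((1 - t) *\<^sub>R x + t *\<^sub>R y) powr p \<le> (1 - t) * x powr p + t * y powr p"
  proof (cases "x = 0")
    case True
    have "(t * y) powr p = t powr p * y powr p"
      using t xy by (simp add: powr_mult)
    also have "\<dots> \<le> t * y powr p"
      using t assms by (intro mult_right_mono powr_le_one_le) auto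
    finally show ?thesis
      using True by simp
  next
    case False
    with xy show ?thesis
      using convex_onD[OF powr_convex[OF assms], of t x y] t by simp
  qed
qed (simp add: convex_real_interval)

lemma lpnorm_on_add_null:
  assumes "p > 0" "finite I" "lpnorm_on p I f = 0"
  shows "lpnorm_on p I (\<lambda>i. f i + g i) = lpnorm_on p I g"
proof -
  have "f i = 0" if "i \<in> I" for i
    using abs_le_lpnorm_on[OF assms(1,2) that, of f] assms(3) by simp
  then show ?thesis
    unfolding lpnorm_on_def by (intro arg_cong[where f = "\<lambda>s. s powr _"] sum.cong) auto
qed

text \<open>Minkowski's inequality, from the convexity of \<open>x powr p\<close>: with \<open>a\<close>, \<open>b\<close> the norms
  of \<open>f\<close>, \<open>g\<close>, the vector \<open>(f + g) / (a + b)\<close> is a convex combination of \<open>f / a\<close> and \<open>g / b\<close>.\<close>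
lemma lpnorm_on_triangle:
  assumes "p \<ge> 1" "finite I"
  shows "lpnorm_on p I (\<lambda>i. f i + g i) \<le> lpnorm_on p I f + lpnorm_on p I g"
proof -
  define a b where "a = lpnorm_on p I f" and "b = lpnorm_on p I g"
  have "p > 0"
    using assms by simp
  consider "a = 0" | "b = 0" | "a > 0" "b > 0"
    using lpnorm_on_nonneg a_def b_def by (metis order_le_less)
  then show ?thesis
  proof cases
    case 1
    then show ?thesis
      using lpnorm_on_add_null[OF \<open>p > 0\<close> assms(2)] a_def by simp
  next
    case 2
    then show ?thesis
      using lpnorm_on_add_null[OF \<open>p > 0\<close> assms(2), of g f] b_def by (simp add: add.commute)
  next
    case 3
    define t where "t = b / (a + b)"
    have t: "0 \<le> t" "t \<le> 1" "1 - t = a / (a + b)"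
      using 3 by (auto simp: t_def field_simps)
    have pointwise: "\<bar>f i + g i\<bar> powr p
        \<le> (a + b) powr p * ((1 - t) * (\<bar>f i\<bar> / a) powr p + t * (\<bar>g i\<bar> / b) powr p)" for i
    proof -
      have "(1 - t) * (\<bar>f i\<bar> / a) = \<bar>f i\<bar> / (a + b)" "t * (\<bar>g i\<bar> / b) = \<bar>g i\<bar> / (a + b)"
        using 3 by (simp add: t(3), simp add: t_def)
      then have "\<bar>f i\<bar> + \<bar>g i\<bar> = (a + b) * ((1 - t) * (\<bar>f i\<bar> / a) + t * (\<bar>g i\<bar> / b))"
        using 3 by (simp add: add_divide_distrib[symmetric])
      then have "\<bar>f i + g i\<bar> powr p \<le> ((a + b) * ((1 - t) * (\<bar>f i\<bar> / a) + t * (\<bar>g i\<bar> / b))) powr p"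
        using \<open>p > 0\<close> abs_triangle_ineq[of "f i" "g i"] by (intro powr_mono2) auto
      also have "\<dots> = (a + b) powr p * ((1 - t) * (\<bar>f i\<bar> / a) + t * (\<bar>g i\<bar> / b)) powr p"
        using 3 t by (simp add: powr_mult)
      also have "\<dots> \<le> (a + b) powr p * ((1 - t) * (\<bar>f i\<bar> / a) powr p + t * (\<bar>g i\<bar> / b) powr p)"
        using convex_onD[OF convex_on_powr_nonneg[OF assms(1)], of t "\<bar>f i\<bar> / a" "\<bar>g i\<bar> / b"] 3 t
        by (intro mult_left_mono) auto
      finally show ?thesis .
    qed
    have "(\<Sum>i\<in>I. \<bar>f i + g i\<bar> powr p)
        \<le> (\<Sum>i\<in>I. (a + b) powr p * ((1 - t) * (\<bar>f i\<bar> / a) powr p + t * (\<bar>g i\<bar> / b) powr p))"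
      by (intro sum_mono pointwise)
    also have "\<dots> = (a + b) powr p * ((1 - t) * (\<Sum>i\<in>I. \<bar>f i\<bar> powr p) / a powr p
                                     + t * (\<Sum>i\<in>I. \<bar>g i\<bar> powr p) / b powr p)"
      using 3 by (simp add: powr_divide sum.distrib sum_distrib_left sum_divide_distrib algebra_simps)
    also have "\<dots> = (a + b) powr p"
      using 3 \<open>p > 0\<close> by (simp add: a_def b_def lpnorm_on_powr[symmetric])
    finally show ?thesis
      using 3 \<open>p > 0\<close> by (intro lpnorm_on_le) (auto simp: a_def b_def)
  qed
qed

lemma abs_diff_lpnorm_on_le:
  assumes "p \<ge> 1" "finite I"
  shows "\<bar>lpnorm_on p I f - lpnorm_on p I g\<bar> \<le> lpnorm_on p I (\<lambda>i. f i - g i)"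
  using lpnorm_on_triangle[OF assms, of "\<lambda>i. f i - g i" g]
    lpnorm_on_triangle[OF assms, of "\<lambda>i. g i - f i" f]
  by (simp add: lpnorm_on_minus_commute[of p I g f])

text \<open>Normalising two vectors at distance \<open>\<delta>\<close> at most doubles their distance relative to
  the norm \<open>A\<close> of the first: \<open>a/A - b/B = (a - b)/A + (1/A - 1/B) b\<close>, and the second term has
  norm \<open>\<bar>A - B\<bar>/A \<le> \<delta>/A\<close>.\<close>
lemma lpnorm_on_normalize_diff:
  assumes "p \<ge> 1" "finite I" "lpnorm_on p I a > 0" "lpnorm_on p I b > 0"
  shows "lpnorm_on p I (\<lambda>i. a i / lpnorm_on p I a - b i / lpnorm_on p I b)
           \<le> 2 * lpnorm_on p I (\<lambda>i. a i - b i) / lpnorm_on p I a"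
proof -
  define A B where "A = lpnorm_on p I a" and "B = lpnorm_on p I b"
  have "p > 0" "A > 0" "B > 0"
    using assms by (auto simp: A_def B_def)
  have split: "a i / A - b i / B = (1 / A) * (a i - b i) + (1 / A - 1 / B) * b i" for i
    by (simp add: algebra_simps diff_divide_distrib)
  have "\<bar>1 / A - 1 / B\<bar> * B = \<bar>A - B\<bar> / A"
    using \<open>A > 0\<close> \<open>B > 0\<close> by (simp add: field_simps abs_minus_commute abs_divide abs_mult)
  also have "\<dots> \<le> lpnorm_on p I (\<lambda>i. a i - b i) / A"
    using abs_diff_lpnorm_on_le[OF assms(1,2), of a b] \<open>A > 0\<close>
    by (intro divide_right_mono) (auto simp: A_def B_def)
  finally have second: "\<bar>1 / A - 1 / B\<bar> * B \<le> lpnorm_on p I (\<lambda>i. a i - b i) / A" .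
  have "lpnorm_on p I (\<lambda>i. a i / A - b i / B)
      \<le> lpnorm_on p I (\<lambda>i. (1 / A) * (a i - b i)) + lpnorm_on p I (\<lambda>i. (1 / A - 1 / B) * b i)"
    unfolding split by (rule lpnorm_on_triangle[OF assms(1,2)])
  also have "\<dots> = lpnorm_on p I (\<lambda>i. a i - b i) / A + \<bar>1 / A - 1 / B\<bar> * B"
    using lpnorm_on_cmult[OF \<open>p > 0\<close>, of I "1 / A" "\<lambda>i. a i - b i"]
      lpnorm_on_cmult[OF \<open>p > 0\<close>, of I "1 / A - 1 / B" b] \<open>A > 0\<close>
    by (simp add: B_def)
  also have "\<dots> \<le> 2 * lpnorm_on p I (\<lambda>i. a i - b i) / A"
    using second by simp
  finally show ?thesis
    by (simp add: A_def B_def)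
qed

lemma
  fixes f :: "'a \<Rightarrow> real"
  assumes "p > 0" "finite W" "\<And>z. z \<notin> W \<Longrightarrow> f z = 0"
  shows in_lp_finite_support: "in_lp p f"
    and lp_norm_finite_support: "lp_norm p f = lpnorm_on p W f"
proof -
  define h where "h z = \<bar>f z\<bar> powr p" for z
  have vanish: "\<And>z. z \<in> UNIV - W \<Longrightarrow> h z = 0"
    using assms by (simp add: h_def)
  show "in_lp p f"
    unfolding in_lp_def h_def[symmetric]
    using summable_on_cong_neutral[of W UNIV h h] vanish assms(2) by auto
  show "lp_norm p f = lpnorm_on p W f"
    unfolding lp_norm_def lpnorm_on_def h_def[symmetric]
    using infsum_cong_neutral[of W UNIV h h] vanish assms(2) by auto
qed

definition unif_prob :: "'a set \<Rightarrow> 'a \<Rightarrow> real" where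
  "unif_prob U z = (if z \<in> U then 1 / real (card U) else 0)"

lemma unif_prob_nonneg: "0 \<le> unif_prob U z"
  by (simp add: unif_prob_def)

lemma sum_unif_prob:
  assumes "finite W" "U \<subseteq> W" "U \<noteq> {}"
  shows "(\<Sum>z\<in>W. unif_prob U z) = 1"
proof -
  have "finite U"
    using assms finite_subset by blast
  have "(\<Sum>z\<in>W. unif_prob U z) = (\<Sum>z\<in>U. unif_prob U z)"
    using assms by (intro sum.mono_neutral_right) (auto simp: unif_prob_def)
  with \<open>finite U\<close> assms(3) show ?thesis
    by (simp add: unif_prob_def)
qed

text \<open>The \<open>p\<close>-th power of \<open>spread p I c\<close> is the mixture of the uniform distributions on the
  members \<open>U\<close> of \<open>I\<close> with weights \<open>\<bar>c U\<bar> powr p\<close>; hence it preserves the \<open>\<ell>\<^sup>p\<close>-norm.\<close>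
definition spread :: "real \<Rightarrow> 'a set set \<Rightarrow> ('a set \<Rightarrow> real) \<Rightarrow> 'a \<Rightarrow> real" where
  "spread p I c z = lpnorm_on p I (\<lambda>U. c U * unif_prob U z powr (1 / p))"

lemma spread_nonneg: "0 \<le> spread p I c z"
  by (simp add: spread_def lpnorm_on_nonneg)

lemma spread_powr:
  assumes "p > 0"
  shows "spread p I c z powr p = (\<Sum>U\<in>I. \<bar>c U\<bar> powr p * unif_prob U z)"
proof -
  have "\<bar>c U * unif_prob U z powr (1 / p)\<bar> powr p = \<bar>c U\<bar> powr p * unif_prob U z" for U
    using assms unif_prob_nonneg[of U z] by (simp add: abs_mult powr_mult powr_powr)
  with assms show ?thesis
    by (simp add: spread_def lpnorm_on_powr)
qed

lemma spread_eq_0: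
  assumes "z \<notin> \<Union>I"
  shows "spread p I c z = 0"
  using assms by (auto simp: spread_def lpnorm_on_def unif_prob_def intro!: sum.neutral)

lemma spread_pos:
  assumes "p > 0" "finite I" "U \<in> I" "finite U" "z \<in> U" "c U \<noteq> 0"
  shows "spread p I c z > 0"
proof -
  have "0 < \<bar>c U * unif_prob U z powr (1 / p)\<bar>"
    using assms by (auto simp: unif_prob_def card_gt_0_iff)
  also have "\<dots> \<le> spread p I c z"
    unfolding spread_def using assms by (intro abs_le_lpnorm_on)
  finally show ?thesis .
qed

lemma spread_mono_neutral:
  assumes "finite J" "I \<subseteq> J" "\<And>U. U \<in> J - I \<Longrightarrow> c U = 0"
  shows "spread p J c = spread p I c"
  using assms unfolding spread_def by (intro ext lpnorm_on_mono_neutral) auto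

lemma abs_diff_spread_le:
  assumes "p \<ge> 1" "finite I"
  shows "\<bar>spread p I c z - spread p I d z\<bar> \<le> spread p I (\<lambda>U. c U - d U) z"
  using abs_diff_lpnorm_on_le[OF assms] by (simp add: spread_def left_diff_distrib)

lemma sum_spread_powr:
  assumes "p > 0" "finite W" "\<Union>I \<subseteq> W" "{} \<notin> I"
  shows "(\<Sum>z\<in>W. spread p I c z powr p) = lpnorm_on p I c powr p"
proof -
  have "(\<Sum>z\<in>W. spread p I c z powr p) = (\<Sum>U\<in>I. \<bar>c U\<bar> powr p * (\<Sum>z\<in>W. unif_prob U z))"
    using assms(1) by (simp add: spread_powr sum.swap[of _ W] sum_distrib_left)
  also have "\<dots> = (\<Sum>U\<in>I. \<bar>c U\<bar> powr p)"
    using assms by (intro sum.cong refl) (subst sum_unif_prob[of W]; auto)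
  finally show ?thesis
    using assms(1) by (simp add: lpnorm_on_powr)
qed

lemma
  assumes "p > 0" "finite I" "\<forall>U\<in>I. finite U \<and> U \<noteq> {}"
  shows in_lp_spread: "in_lp p (spread p I c)"
    and lp_norm_spread: "lp_norm p (spread p I c) = lpnorm_on p I c"
proof -
  have "finite (\<Union>I)"
    using assms by blast
  then show "in_lp p (spread p I c)"
    by (rule in_lp_finite_support[OF assms(1) _ spread_eq_0])
  have "lp_norm p (spread p I c) = lpnorm_on p (\<Union>I) (spread p I c)"
    using \<open>finite (\<Union>I)\<close> by (rule lp_norm_finite_support[OF assms(1) _ spread_eq_0])
  also have "\<dots> = lpnorm_on p I c"
    using sum_spread_powr[OF assms(1) \<open>finite (\<Union>I)\<close>, of I c] assms(3)
    by (intro lpnorm_on_eq assms(1) lpnorm_on_nonneg) (auto simp: spread_nonneg)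
  finally show "lp_norm p (spread p I c) = lpnorm_on p I c" .
qed

lemma lp_norm_diff_spread_le:
  assumes "p \<ge> 1" "finite I" "\<forall>U\<in>I. finite U \<and> U \<noteq> {}"
  shows "lp_norm p (\<lambda>z. spread p I c z - spread p I d z) \<le> lpnorm_on p I (\<lambda>U. c U - d U)"
proof -
  define W where "W = \<Union>I"
  have "p > 0" "finite W"
    using assms by (auto simp: W_def)
  have "lp_norm p (\<lambda>z. spread p I c z - spread p I d z)
      = lpnorm_on p W (\<lambda>z. spread p I c z - spread p I d z)"
    using \<open>p > 0\<close> \<open>finite W\<close> by (intro lp_norm_finite_support) (auto simp: W_def spread_eq_0)
  also have "\<dots> \<le> lpnorm_on p I (\<lambda>U. c U - d U)"
  proof (intro lpnorm_on_le \<open>p > 0\<close> lpnorm_on_nonneg)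
    have "(\<Sum>z\<in>W. \<bar>spread p I c z - spread p I d z\<bar> powr p)
        \<le> (\<Sum>z\<in>W. spread p I (\<lambda>U. c U - d U) z powr p)"
      using \<open>p > 0\<close> abs_diff_spread_le[OF assms(1,2)] by (intro sum_mono powr_mono2) auto
    also have "\<dots> = lpnorm_on p I (\<lambda>U. c U - d U) powr p"
      using \<open>p > 0\<close> \<open>finite W\<close> assms(3) by (intro sum_spread_powr) (auto simp: W_def)
    finally show "(\<Sum>z\<in>W. \<bar>spread p I c z - spread p I d z\<bar> powr p)
        \<le> lpnorm_on p I (\<lambda>U. c U - d U) powr p" .
  qed
  finally show ?thesis .
qed

lemma finite_cball_if_bounded_geometry:
  fixes x :: "'a::metric_space"
  assumes "bounded_geometry TYPE('a)" "0 \<le> R"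
  shows "finite (cball x R)"
  using assms unfolding bounded_geometry_def by blast

lemma open_if_finite_cballs:
  fixes S :: "'a::metric_space set"
  assumes "\<And>x::'a. finite (cball x 1)"
  shows "open S"
  unfolding open_dist
proof
  fix x assume "x \<in> S"
  obtain d where "d > 0" and d: "\<forall>y\<in>cball x 1. y \<noteq> x \<longrightarrow> d \<le> dist x y"
    using finite_set_avoid[OF assms] by blast
  have "y \<in> S" if "dist y x < min d 1" for y
    using d that \<open>x \<in> S\<close> by (cases "y = x") (auto simp: dist_commute)
  with \<open>d > 0\<close> show "\<exists>e>0. \<forall>y. dist y x < e \<longrightarrow> y \<in> S"
    by (intro exI[of _ "min d 1"]) auto
qed

lemma ball_subset_imp_le_infdist:
  assumes "ball x r \<subseteq> U" "U \<noteq> UNIV"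
  shows "r \<le> infdist x (-U)"
proof -
  have "-U \<noteq> {}"
    using assms(2) by auto
  then have "r \<le> (INF y\<in>-U. dist x y)"
    by (rule cINF_greatest) (use assms(1) in \<open>auto simp: subset_iff not_less\<close>)
  with \<open>-U \<noteq> {}\<close> show ?thesis
    by (simp add: infdist_notempty)
qed

lemma dist_le_mesh:
  assumes "U \<in> \<U>" "x \<in> U" "y \<in> U"
  shows "ereal (dist x y) \<le> mesh \<U>"
proof -
  have "ereal (dist x y) \<le> ediam U"
    unfolding ediam_def using assms by (intro SUP_upper2[of "(x, y)"]) auto
  also have "\<dots> \<le> mesh \<U>"
    unfolding mesh_def using assms(1) by (rule SUP_upper)
  finally show ?thesis .
qed

lemma finite_member_if_finite_mesh:
  fixes \<U> :: "'a::metric_space set set"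
  assumes "\<And>(x::'a) R. 0 \<le> R \<Longrightarrow> finite (cball x R)" "mesh \<U> < \<infinity>" "U \<in> \<U>"
  shows "finite U"
proof (cases "U = {}")
  case False
  then obtain x where "x \<in> U"
    by blast
  with assms(3) have "0 \<le> mesh \<U>"
    using dist_le_mesh[of U \<U> x x] by (simp add: zero_ereal_def)
  with assms(2) obtain r where r: "mesh \<U> = ereal r" "0 \<le> r"
    by (cases "mesh \<U>") auto
  have "U \<subseteq> cball x r"
    using dist_le_mesh[OF assms(3) \<open>x \<in> U\<close>] r by auto
  with assms(1) r(2) show ?thesis
    by (meson finite_subset)
qed simp

lemma prop_xi_eq_mesh:
  assumes "\<And>x y. \<xi> x y \<noteq> 0 \<longleftrightarrow> (\<exists>U\<in>\<U>. x \<in> U \<and> y \<in> U)"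
  shows "prop_xi \<xi> = mesh \<U>"
proof (rule antisym)
  show "prop_xi \<xi> \<le> mesh \<U>"
    unfolding prop_xi_def
  proof (rule Sup_least)
    fix r assume "r \<in> {ereal (dist x y) |x y. \<xi> x y \<noteq> 0}"
    then obtain x y where "r = ereal (dist x y)" "\<xi> x y \<noteq> 0"
      by blast
    with assms show "r \<le> mesh \<U>"
      using dist_le_mesh by blast
  qed
  show "mesh \<U> \<le> prop_xi \<xi>"
    unfolding mesh_def ediam_def
  proof (intro SUP_least)
    fix U xy assume "U \<in> \<U>" "xy \<in> U \<times> U"
    then have "\<xi> (fst xy) (snd xy) \<noteq> 0"
      using assms by auto
    then show "ereal (dist (fst xy) (snd xy)) \<le> prop_xi \<xi>"
      unfolding prop_xi_def by (blast intro: Sup_upper)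
  qed
qed

definition members_at :: "'a set set \<Rightarrow> 'a \<Rightarrow> 'a set set" where
  "members_at \<U> x = {U \<in> \<U>. x \<in> U}"

lemma
  assumes "finite_mult \<U>"
  shows finite_members_at_if_finite_mult: "finite (members_at \<U> x)"
    and card_members_at_le_mult: "card (members_at \<U> x) \<le> mult \<U>"
proof -
  obtain M where M: "\<And>x. finite (members_at \<U> x) \<and> card (members_at \<U> x) \<le> M"
    using assms unfolding finite_mult_def members_at_def by blast
  then show "finite (members_at \<U> x)"
    by blast
  have "bdd_above (range (\<lambda>x. card (members_at \<U> x)))"
    using M by (intro bdd_aboveI[of _ M]) auto
  then show "card (members_at \<U> x) \<le> mult \<U>"
    unfolding mult_def members_at_def by (rule cSUP_upper[OF UNIV_I])
qed

locale lp_cover =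
  fixes \<U> :: "'a::metric_space set set" and p :: real
  assumes p_ge_1: "1 \<le> p"
    and covers: "\<Union>\<U> = UNIV"
    and finite_members_at: "finite (members_at \<U> x)"
    and finite_member: "U \<in> \<U> \<Longrightarrow> finite U"
    and open_member: "U \<in> \<U> \<Longrightarrow> open U"
    and UNIV_notin: "UNIV \<notin> \<U>"
begin

lemma p_pos: "0 < p"
  using p_ge_1 by simp

lemma infdist_compl_pos:
  assumes "U \<in> \<U>" "x \<in> U"
  shows "0 < infdist x (-U)"
proof -
  have "-U \<noteq> {}"
    using assms(1) UNIV_notin by (metis Compl_empty_eq double_compl)
  with assms show ?thesis
    using open_member by (intro infdist_pos_not_in_closed) auto
qed

definition cover_depth :: "'a \<Rightarrow> real" where
  "cover_depth x = lpnorm_on p (members_at \<U> x) (\<lambda>U. infdist x (-U))"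

definition cover_map :: "'a \<Rightarrow> 'a \<Rightarrow> real" where
  "cover_map x = spread p (members_at \<U> x) (\<lambda>U. infdist x (-U) / cover_depth x)"

lemma infdist_le_cover_depth:
  assumes "U \<in> \<U>" "x \<in> U"
  shows "infdist x (-U) \<le> cover_depth x"
  using abs_le_lpnorm_on[OF p_pos finite_members_at, of U x "\<lambda>U. infdist x (-U)"] assms
  by (simp add: cover_depth_def members_at_def)

lemma cover_depth_pos: "0 < cover_depth x"
proof -
  have "x \<in> \<Union>\<U>"
    using covers by simp
  then obtain U where "U \<in> \<U>" "x \<in> U"
    by blast
  then show ?thesis
    using infdist_compl_pos infdist_le_cover_depth by (meson less_le_trans)
qed

lemma leb_le_cover_depth: "leb \<U> \<le> ereal (cover_depth x)"
proof -
  have radius_le: "r \<le> cover_depth x" if "U \<in> \<U>" "ball x r \<subseteq> U" for U r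
  proof (cases "0 < r")
    case True
    then have "x \<in> U"
      using that(2) centre_in_ball by blast
    have "U \<noteq> UNIV"
      using that(1) UNIV_notin by blast
    with that(2) have "r \<le> infdist x (-U)"
      by (rule ball_subset_imp_le_infdist)
    also have "\<dots> \<le> cover_depth x"
      using that(1) \<open>x \<in> U\<close> by (rule infdist_le_cover_depth)
    finally show ?thesis .
  next
    case False
    then show ?thesis
      using cover_depth_pos[of x] by linarith
  qed
  have "leb \<U> \<le> leb_at \<U> x"
    unfolding leb_def by (rule INF_lower) simp
  also have "\<dots> \<le> ereal (cover_depth x)"
    unfolding leb_at_def
  proof (intro SUP_least Sup_least)
    fix U s assume "U \<in> \<U>" "s \<in> {ereal r |r. ball x r \<subseteq> U}"
    then show "s \<le> ereal (cover_depth x)"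
      using radius_le by auto
  qed
  finally show ?thesis .
qed

lemma members_at_finite_nonempty: "\<forall>U\<in>members_at \<U> x. finite U \<and> U \<noteq> {}"
  by (auto simp: members_at_def finite_member)

lemma cover_map_in_lp_sphere: "cover_map x \<in> lp_sphere p"
proof -
  have "lpnorm_on p (members_at \<U> x) (\<lambda>U. infdist x (-U) / cover_depth x) = 1"
    using lpnorm_on_cmult[OF p_pos, of _ "1 / cover_depth x" "\<lambda>U. infdist x (-U)"]
      cover_depth_pos[of x]
    by (simp add: cover_depth_def)
  then show ?thesis
    using in_lp_spread[OF p_pos finite_members_at members_at_finite_nonempty]
      lp_norm_spread[OF p_pos finite_members_at members_at_finite_nonempty]
    by (simp add: lp_sphere_def cover_map_def)
qed

lemma cover_map_ne_0_iff: "cover_map x z \<noteq> 0 \<longleftrightarrow> (\<exists>U\<in>\<U>. x \<in> U \<and> z \<in> U)"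
proof
  assume "cover_map x z \<noteq> 0"
  then have "z \<in> \<Union>(members_at \<U> x)"
    by (metis cover_map_def spread_eq_0)
  then show "\<exists>U\<in>\<U>. x \<in> U \<and> z \<in> U"
    by (auto simp: members_at_def)
next
  assume "\<exists>U\<in>\<U>. x \<in> U \<and> z \<in> U"
  then obtain U where "U \<in> \<U>" "x \<in> U" "z \<in> U"
    by blast
  then have "U \<in> members_at \<U> x"
    by (simp add: members_at_def)
  have "0 < cover_map x z"
    unfolding cover_map_def
    using \<open>U \<in> members_at \<U> x\<close> finite_member[OF \<open>U \<in> \<U>\<close>] \<open>z \<in> U\<close>
  proof (rule spread_pos[OF p_pos finite_members_at])
    show "infdist x (-U) / cover_depth x \<noteq> 0"
      using infdist_compl_pos[OF \<open>U \<in> \<U>\<close> \<open>x \<in> U\<close>] cover_depth_pos[of x] by simp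
  qed
  then show "cover_map x z \<noteq> 0"
    by simp
qed

lemma lp_norm_cover_map_diff_le:
  "lp_norm p (\<lambda>z. cover_map x z - cover_map y z)
     \<le> 2 * real (card (members_at \<U> x \<union> members_at \<U> y)) powr (1 / p) / cover_depth x * dist x y"
proof -
  define I where "I = members_at \<U> x \<union> members_at \<U> y"
  define a b where "a U = infdist x (-U)" and "b U = infdist y (-U)" for U
  have "finite I" "\<forall>U\<in>I. finite U \<and> U \<noteq> {}"
    using finite_members_at members_at_finite_nonempty by (auto simp: I_def)
  have sub: "members_at \<U> x \<subseteq> I" "members_at \<U> y \<subseteq> I"
    by (auto simp: I_def)
  have a_vanish: "a U = 0" if "U \<in> I - members_at \<U> x" for U
  proof -
    have "x \<notin> U"
      using that by (auto simp: I_def members_at_def)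
    then show ?thesis
      by (simp add: a_def)
  qed
  have b_vanish: "b U = 0" if "U \<in> I - members_at \<U> y" for U
  proof -
    have "y \<notin> U"
      using that by (auto simp: I_def members_at_def)
    then show ?thesis
      by (simp add: b_def)
  qed
  have "lpnorm_on p I a = cover_depth x" "lpnorm_on p I b = cover_depth y"
    unfolding cover_depth_def a_def[symmetric] b_def[symmetric]
    using lpnorm_on_mono_neutral[OF \<open>finite I\<close> sub(1) a_vanish]
      lpnorm_on_mono_neutral[OF \<open>finite I\<close> sub(2) b_vanish]
    by simp_all
  moreover have "cover_map x = spread p I (\<lambda>U. a U / cover_depth x)"
    "cover_map y = spread p I (\<lambda>U. b U / cover_depth y)"
    unfolding cover_map_def a_def[symmetric] b_def[symmetric]
    using spread_mono_neutral[OF \<open>finite I\<close> sub(1), of "\<lambda>U. a U / cover_depth x"]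
      spread_mono_neutral[OF \<open>finite I\<close> sub(2), of "\<lambda>U. b U / cover_depth y"]
    by (simp_all add: a_vanish b_vanish)
  ultimately have "lp_norm p (\<lambda>z. cover_map x z - cover_map y z)
      \<le> lpnorm_on p I (\<lambda>U. a U / lpnorm_on p I a - b U / lpnorm_on p I b)"
    using lp_norm_diff_spread_le[OF p_ge_1 \<open>finite I\<close>] \<open>\<forall>U\<in>I. _\<close> by simp
  also have "\<dots> \<le> 2 * lpnorm_on p I (\<lambda>U. a U - b U) / cover_depth x"
    using lpnorm_on_normalize_diff[OF p_ge_1 \<open>finite I\<close>, of a b]
      \<open>lpnorm_on p I a = _\<close> \<open>lpnorm_on p I b = _\<close> cover_depth_pos
    by simp
  also have "\<dots> \<le> 2 * (real (card I) powr (1 / p) * dist x y) / cover_depth x"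
    using lpnorm_on_le_card[OF p_pos, of I "\<lambda>U. a U - b U" "dist x y"] cover_depth_pos[of x]
    by (intro divide_right_mono mult_left_mono) (auto simp: a_def b_def infdist_triangle_abs)
  finally show ?thesis
    by (simp add: I_def)
qed

lemma cover_map_lipschitz:
  assumes "\<And>x. card (members_at \<U> x) \<le> m" "0 < L" "\<And>x. L \<le> cover_depth x"
  shows "lp_norm p (\<lambda>z. cover_map x z - cover_map y z) \<le> 2 * (2 * real m) powr (1 / p) / L * dist x y"
proof -
  have "card (members_at \<U> x \<union> members_at \<U> y) \<le> 2 * m"
    using card_Un_le[of "members_at \<U> x" "members_at \<U> y"] assms(1)[of x] assms(1)[of y] by linarith
  then have "real (card (members_at \<U> x \<union> members_at \<U> y)) powr (1 / p) \<le> (2 * real m) powr (1 / p)"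
    using p_pos by (intro powr_mono2) (auto dest: of_nat_mono)
  then have "2 * real (card (members_at \<U> x \<union> members_at \<U> y)) powr (1 / p) / cover_depth x
      \<le> 2 * (2 * real m) powr (1 / p) / L"
    using assms(2,3) by (intro frac_le) auto
  then show ?thesis
    using lp_norm_cover_map_diff_le[of x y] by (meson mult_right_mono order_trans zero_le_dist)
qed

end

lemma lp_cover_if_bounded_geometry:
  fixes \<U> :: "'a::metric_space set set"
  assumes "bounded_geometry TYPE('a)" "1 \<le> p" "\<Union>\<U> = UNIV" "finite_mult \<U>" "mesh \<U> < \<infinity>"
    "UNIV \<notin> \<U>"
  shows "lp_cover \<U> p"
proof
  have finite_cball: "\<And>(x::'a) R. 0 \<le> R \<Longrightarrow> finite (cball x R)"
    using finite_cball_if_bounded_geometry[OF assms(1)] .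
  show "1 \<le> p" "\<Union>\<U> = UNIV" "UNIV \<notin> \<U>"
    using assms by auto
  show "finite (members_at \<U> x)" for x
    using assms(4) by (rule finite_members_at_if_finite_mult)
  show "finite U" if "U \<in> \<U>" for U
    using finite_cball assms(5) that by (rule finite_member_if_finite_mesh)
  show "open U" if "U \<in> \<U>" for U
    by (rule open_if_finite_cballs) (simp add: finite_cball)
qed

theorem theorem3p2p1:
  fixes \<U> :: "'a::metric_space set set" and p :: real
  assumes "bounded_geometry TYPE('a)"
    and "1 \<le> p"
    and "\<Union>\<U> = UNIV"
    and "finite_mult \<U>"
    and "mesh \<U> < \<infinity>"
    and "leb \<U> > 0"
    and "UNIV \<notin> \<U>"
  shows "\<exists>\<xi> :: 'a \<Rightarrow> 'a \<Rightarrow> real.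
           (\<forall>x. \<xi> x \<in> lp_sphere p) \<and>
           prop_xi \<xi> = mesh \<U> \<and>
           (\<forall>x y. lp_norm p (\<lambda>z. \<xi> x z - \<xi> y z)
              \<le> (2 * (2 * real (mult \<U>) ^ 2) powr (1 / p) / real_of_ereal (leb \<U>)) * dist x y)"
proof -
  interpret lp_cover \<U> p
    using assms(1-5,7) by (rule lp_cover_if_bounded_geometry)
  define L where "L = real_of_ereal (leb \<U>)"
  have "leb \<U> = ereal L"
    unfolding L_def using assms(6) leb_le_cover_depth[of undefined] by (cases "leb \<U>") auto
  then have "0 < L" and L_le: "\<And>x. L \<le> cover_depth x"
    using assms(6) leb_le_cover_depth by auto
  have "(2 * real (mult \<U>)) powr (1 / p) \<le> (2 * real (mult \<U>) ^ 2) powr (1 / p)"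
    using p_pos of_nat_mono[OF le_square[of "mult \<U>"]] by (intro powr_mono2) (auto simp: power2_eq_square)
  then have "lp_norm p (\<lambda>z. cover_map x z - cover_map y z)
      \<le> (2 * (2 * real (mult \<U>) ^ 2) powr (1 / p) / L) * dist x y" for x y
    using cover_map_lipschitz[where m = "mult \<U>" and L = L, OF card_members_at_le_mult[OF assms(4)]
        \<open>0 < L\<close> L_le, of x y] \<open>0 < L\<close>
    by (smt (verit) divide_right_mono mult_left_mono mult_right_mono zero_le_dist)
  then show ?thesis
    using cover_map_in_lp_sphere prop_xi_eq_mesh[OF cover_map_ne_0_iff] L_def by blast
qed

end
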